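(* Assume the standing hypotheses (H) below. Then the group $G:=\mathcal P^{-1}(\Omega)$ acts freely, properly discontinuously and cocompactly on $\mathbb{R}^p\times C$.
   Context: Bundle automorphisms: fix integers $p\ge q\ge1$, a simply connected manifold $C$ and a decomposition $\mathbb{R}^p=E^q\oplus E^{p-q}$ with $\dim E^q=q$. An automorphism of the trivial bundle $\mathbb{R}^p\times C\to C$ is a map $(a,x)\mapsto(Aa+f(x),\varphi(x))$ with $A\in\mathrm{GL}_p(\mathbb{R})$ (linear part), $f\in C^\infty(C,\mathbb{R}^p)$ (translation part), $\varphi\in\mathrm{Diff}(C)$. $\mathrm{Aut}^{\mathbb{Z}}_{E^q}(\mathbb{R}^p\times C\to C)$ is the set of those with $A\in\mathrm{GL}_p(\mathbb{Z})$ and the projection of $f$ onto $E^q$ parallel to $E^{p-q}$ constant. An automorphism of the trivial bundle $(S^1)^p\times C\to C$, $(S^1)^p=\mathbb{R}^p/\mathbb{Z}^p$, is a map $(\bar a,x)\mapsto(A\bar a+\bar f(x),\varphi(x))$ with $A\in\mathrm{GL}_p(\mathbb{Z})$, $\bar f\in C^\infty(C,(S^1)^p)$, $\varphi\in\mathrm{Diff}(C)$; each lifts to an automorphism of $\mathbb{R}^p\times C\to C$, lifts differing by translations by $\mathbb{Z}^p$. $\mathrm{Aut}_{E^q}((S^1)^p\times C\to C)$ is the set of those whose lifts lie in $\mathrm{Aut}^{\mathbb{Z}}_{E^q}(\mathbb{R}^p\times C\to C)$, and $\mathcal P:\mathrm{Aut}^{\mathbb{Z}}_{E^q}(\mathbb{R}^p\times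 C\to C)\to\mathrm{Aut}_{E^q}((S^1)^p\times C\to C)$ is the reduction modulo $\mathbb{Z}^p$. The linear part and the restriction $\omega|_C=\varphi$ of $\omega\in\mathrm{Aut}_{E^q}((S^1)^p\times C\to C)$ are well defined. Standing hypotheses (H): $p\ge2$ and $\Omega$ is a discrete subgroup of $\mathrm{Aut}_{E^q}((S^1)^p\times C\to C)$ such that (i) the action of $\Omega$ on $C$ given by $\omega\mapsto\omega|_C$ is proper and cocompact; (ii) the linear part of every $\omega\in\Omega$ preserves $E^q$ and $E^{p-q}$; (iii) there is a scalar product $g_{E^q}$ on $E^q$ such that the restriction to $E^q$ of the linear part of every $\omega\in\Omega$ is a similarity of $g_{E^q}$, not all of them isometries; (iv) if $\omega\in\Omega\setminus\{\mathrm{id}\}$ and $\omega|_C(x)=x$ for some $x\in C$, then no element of $\mathcal P^{-1}(\omega)$ has a fixed point in $\mathbb{R}^p\times\{x\}$. *)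

theory Defs
  imports "HOL-Analysis.Analysis" "HOL-Library.FuncSet"
begin

primrec Ck_on :: "nat \<Rightarrow> 'a::real_normed_vector set \<Rightarrow> ('a \<Rightarrow> 'b::real_normed_vector) \<Rightarrow> bool" where
  "Ck_on 0 U f = continuous_on U f"
| "Ck_on (Suc k) U f = (f differentiable_on U \<and> continuous_on U f \<and>
      (\<forall>v. Ck_on k U (\<lambda>x. frechet_derivative f (at x) v)))"

definition Cinf_on :: "'a::real_normed_vector set \<Rightarrow> ('a \<Rightarrow> 'b::real_normed_vector) \<Rightarrow> bool" where
  "Cinf_on U f \<longleftrightarrow> (\<forall>k. Ck_on k U f)"

definition smooth_map :: "'a::real_normed_vector set \<Rightarrow> ('a \<Rightarrow> 'b::real_normed_vector) \<Rightarrow> bool" where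
  "smooth_map C f \<longleftrightarrow> (\<forall>x\<in>C. \<exists>U F. open U \<and> x \<in> U \<and> Cinf_on U F \<and> (\<forall>y\<in>C \<inter> U. f y = F y))"

text \<open>A (smooth, embedded, boundaryless) submanifold of a Euclidean space.  By Whitney's
  embedding theorem every smooth manifold is diffeomorphic to one of these.\<close>
definition smooth_submanifold :: "'n::euclidean_space set \<Rightarrow> bool" where
  "smooth_submanifold C \<longleftrightarrow> (\<exists>d. \<forall>x\<in>C. \<exists>U V (\<phi>::'n \<Rightarrow> 'n) \<psi> S.
      open U \<and> open V \<and> x \<in> U \<and> \<phi> ` U = V \<and> \<psi> ` V = U \<and>
      (\<forall>y\<in>U. \<psi> (\<phi> y) = y) \<and> (\<forall>z\<in>V. \<phi> (\<psi> z) = z) \<and>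
      Cinf_on U \<phi> \<and> Cinf_on V \<psi> \<and>
      subspace S \<and> dim S = d \<and> \<phi> ` (C \<inter> U) = V \<inter> S)"

definition diffeo :: "'n::euclidean_space set \<Rightarrow> ('n \<Rightarrow> 'n) \<Rightarrow> bool" where
  "diffeo C \<phi> \<longleftrightarrow> bij_betw \<phi> C C \<and> smooth_map C \<phi> \<and> smooth_map C (inv_into C \<phi>)"

definition Zvec :: "(real^'p) set" where
  "Zvec = {v. \<forall>i. v $ i \<in> \<int>}"

definition GLZ :: "(real^'p^'p) set" where
  "GLZ = {A. (\<forall>i j. A $ i $ j \<in> \<int>) \<and> invertible A \<and> (\<forall>i j. matrix_inv A $ i $ j \<in> \<int>)}"

lemma Zvec_equivp: "equivp (\<lambda>a b :: real^'p. a - b \<in> Zvec)"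
proof (rule equivpI)
  show "reflp (\<lambda>a b :: real^'p. a - b \<in> Zvec)"
    by (rule reflpI) (simp add: Zvec_def)
  show "symp (\<lambda>a b :: real^'p. a - b \<in> Zvec)"
  proof (rule sympI)
    fix a b :: "real^'p" assume "a - b \<in> Zvec"
    then have h: "\<forall>i. a $ i - b $ i \<in> \<int>" by (simp add: Zvec_def)
    have "\<forall>i. b $ i - a $ i \<in> \<int>"
    proof
      fix i show "b $ i - a $ i \<in> \<int>" using Ints_minus[OF h[rule_format, of i]] by simp
    qed
    then show "b - a \<in> Zvec" by (simp add: Zvec_def)
  qed
  show "transp (\<lambda>a b :: real^'p. a - b \<in> Zvec)"
  proof (rule transpI)
    fix a b c :: "real^'p" assume "a - b \<in> Zvec" "b - c \<in> Zvec"
    then have h1: "\<forall>i. a $ i - b $ i \<in> \<int>" and h2: "\<forall>i. b $ i - c $ i \<in> \<int>"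
      by (simp_all add: Zvec_def)
    have "\<forall>i. a $ i - c $ i \<in> \<int>"
    proof
      fix i
      have "a $ i - c $ i = (a $ i - b $ i) + (b $ i - c $ i)" by simp
      then show "a $ i - c $ i \<in> \<int>" using Ints_add[OF h1[rule_format, of i] h2[rule_format, of i]] by simp
    qed
    then show "a - c \<in> Zvec" by (simp add: Zvec_def)
  qed
qed

quotient_type 'p torus = "real^('p::finite)" / "\<lambda>a b. a - b \<in> Zvec"
  by (rule Zvec_equivp)

definition torus0 :: "'p::finite torus" where "torus0 = abs_torus 0"

definition tdist :: "'p::finite torus \<Rightarrow> 'p torus \<Rightarrow> real" where
  "tdist u v = Inf {norm (a - b) | a b. abs_torus a = u \<and> abs_torus b = v}"

definition smooth_map_T :: "'n::euclidean_space set \<Rightarrow> ('n \<Rightarrow> 'p::finite torus) \<Rightarrow> bool" where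
  "smooth_map_T C fb \<longleftrightarrow> (\<forall>x\<in>C. \<exists>U (F::'n \<Rightarrow> real^'p). open U \<and> x \<in> U \<and> Cinf_on U F \<and>
      (\<forall>y\<in>C \<inter> U. fb y = abs_torus (F y)))"

text \<open>Automorphisms are represented as maps on R^p x C (resp. torus x C), with value
  undefined over points outside C, so that equality of automorphisms is equality of maps on
  the total space.\<close>

definition aut_R :: "'n::euclidean_space set \<Rightarrow> real^'p^'p \<Rightarrow> ('n \<Rightarrow> real^'p) \<Rightarrow> ('n \<Rightarrow> 'n)
    \<Rightarrow> ((real^'p) \<times> 'n \<Rightarrow> (real^'p) \<times> 'n)" where
  "aut_R C A f \<phi> = (\<lambda>(a, x). if x \<in> C then (A *v a + f x, \<phi> x) else undefined)"

definition aut_T :: "'n::euclidean_space set \<Rightarrow> real^'p^'p \<Rightarrow> ('n \<Rightarrow> 'p::finite torus) \<Rightarrow> ('n \<Rightarrow> 'n)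
    \<Rightarrow> ('p torus \<times> 'n \<Rightarrow> 'p torus \<times> 'n)" where
  "aut_T C A fb \<phi> = (\<lambda>(ab, x). if x \<in> C
      then (abs_torus (A *v rep_torus ab + rep_torus (fb x)), \<phi> x) else undefined)"

definition projE :: "(real^'p) set \<Rightarrow> (real^'p) set \<Rightarrow> real^'p \<Rightarrow> real^'p" where
  "projE E1 E2 v = (THE u. u \<in> E1 \<and> v - u \<in> E2)"

definition AutR :: "'n::euclidean_space set \<Rightarrow> ((real^'p) \<times> 'n \<Rightarrow> (real^'p) \<times> 'n) set" where
  "AutR C = {aut_R C A f \<phi> | A f \<phi>. invertible A \<and> smooth_map C f \<and> diffeo C \<phi>}"

definition AutZ_E :: "'n::euclidean_space set \<Rightarrow> (real^'p) set \<Rightarrow> (real^'p) set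
    \<Rightarrow> ((real^'p) \<times> 'n \<Rightarrow> (real^'p) \<times> 'n) set" where
  "AutZ_E C E1 E2 = {aut_R C A f \<phi> | A f \<phi>. A \<in> GLZ \<and> smooth_map C f \<and> diffeo C \<phi> \<and>
      (\<exists>c. \<forall>x\<in>C. projE E1 E2 (f x) = c)}"

definition AutT :: "'n::euclidean_space set \<Rightarrow> ('p::finite torus \<times> 'n \<Rightarrow> 'p torus \<times> 'n) set" where
  "AutT C = {aut_T C A fb \<phi> | A fb \<phi>. A \<in> GLZ \<and> smooth_map_T C fb \<and> diffeo C \<phi>}"

definition redP :: "'n::euclidean_space set \<Rightarrow> ((real^'p) \<times> 'n \<Rightarrow> (real^'p) \<times> 'n)
    \<Rightarrow> ('p::finite torus \<times> 'n \<Rightarrow> 'p torus \<times> 'n)" where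
  "redP C g = (\<lambda>(ab, x). if x \<in> C
      then (abs_torus (fst (g (rep_torus ab, x))), snd (g (rep_torus ab, x))) else undefined)"

definition AutT_E :: "'n::euclidean_space set \<Rightarrow> (real^'p) set \<Rightarrow> (real^'p) set
    \<Rightarrow> ('p::finite torus \<times> 'n \<Rightarrow> 'p torus \<times> 'n) set" where
  "AutT_E C E1 E2 = {\<omega> \<in> AutT C. \<forall>g \<in> AutR C. redP C g = \<omega> \<longrightarrow> g \<in> AutZ_E C E1 E2}"

definition linpartT :: "'n::euclidean_space set \<Rightarrow> ('p::finite torus \<times> 'n \<Rightarrow> 'p torus \<times> 'n) \<Rightarrow> real^'p^'p" where
  "linpartT C \<omega> = (SOME A. A \<in> GLZ \<and> (\<exists>fb \<phi>. smooth_map_T C fb \<and> diffeo C \<phi> \<and> \<omega> = aut_T C A fb \<phi>))"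

definition transT :: "('p::finite torus \<times> 'n \<Rightarrow> 'p torus \<times> 'n) \<Rightarrow> 'n \<Rightarrow> 'p torus" where
  "transT \<omega> x = fst (\<omega> (torus0, x))"

definition restrC :: "('p::finite torus \<times> 'n \<Rightarrow> 'p torus \<times> 'n) \<Rightarrow> 'n \<Rightarrow> 'n" where
  "restrC \<omega> x = snd (\<omega> (torus0, x))"

definition idT :: "'n::euclidean_space set \<Rightarrow> ('p::finite torus \<times> 'n \<Rightarrow> 'p torus \<times> 'n)" where
  "idT C = restrict id (UNIV \<times> C)"

definition idR :: "'n::euclidean_space set \<Rightarrow> ((real^'p) \<times> 'n \<Rightarrow> (real^'p) \<times> 'n)" where
  "idR C = restrict id (UNIV \<times> C)"

definition is_subgroup_T :: "'n::euclidean_space set \<Rightarrow> ('p::finite torus \<times> 'n \<Rightarrow> 'p torus \<times> 'n) set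
    \<Rightarrow> ('p torus \<times> 'n \<Rightarrow> 'p torus \<times> 'n) set \<Rightarrow> bool" where
  "is_subgroup_T C \<Omega> Aut \<longleftrightarrow> \<Omega> \<subseteq> Aut \<and> idT C \<in> \<Omega> \<and>
     (\<forall>\<omega>\<in>\<Omega>. \<forall>\<omega>'\<in>\<Omega>. compose (UNIV \<times> C) \<omega> \<omega>' \<in> \<Omega>) \<and>
     (\<forall>\<omega>\<in>\<Omega>. \<exists>\<omega>'\<in>\<Omega>. compose (UNIV \<times> C) \<omega> \<omega>' = idT C \<and> compose (UNIV \<times> C) \<omega>' \<omega> = idT C)"

text \<open>Discreteness with respect to the compact-open topology (uniform convergence on
  compact subsets of C of the translation part and of the restriction to C; the linear part
  ranges over the discrete set GL_p(Z)).\<close>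
definition discrete_T :: "'n::euclidean_space set \<Rightarrow> ('p::finite torus \<times> 'n \<Rightarrow> 'p torus \<times> 'n) set \<Rightarrow> bool" where
  "discrete_T C \<Omega> \<longleftrightarrow> (\<forall>\<omega>\<in>\<Omega>. \<exists>K e. compact K \<and> K \<subseteq> C \<and> e > 0 \<and>
     (\<forall>\<omega>'\<in>\<Omega>. linpartT C \<omega>' = linpartT C \<omega> \<and>
        (\<forall>x\<in>K. tdist (transT \<omega>' x) (transT \<omega> x) < e \<and> dist (restrC \<omega>' x) (restrC \<omega> x) < e)
        \<longrightarrow> \<omega>' = \<omega>))"

text \<open>Proper (for a discrete group) and cocompact action on C via omega |-> omega|_C.\<close>
definition proper_on_C :: "'n::euclidean_space set \<Rightarrow> ('p::finite torus \<times> 'n \<Rightarrow> 'p torus \<times> 'n) set \<Rightarrow> bool" where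
  "proper_on_C C \<Omega> \<longleftrightarrow> (\<forall>K. compact K \<and> K \<subseteq> C \<longrightarrow> finite {\<omega>\<in>\<Omega>. restrC \<omega> ` K \<inter> K \<noteq> {}})"

definition cocompact_on_C :: "'n::euclidean_space set \<Rightarrow> ('p::finite torus \<times> 'n \<Rightarrow> 'p torus \<times> 'n) set \<Rightarrow> bool" where
  "cocompact_on_C C \<Omega> \<longleftrightarrow> (\<exists>K. compact K \<and> K \<subseteq> C \<and> C = (\<Union>\<omega>\<in>\<Omega>. restrC \<omega> ` K))"

definition scalar_product_on :: "(real^'p) set \<Rightarrow> (real^'p \<Rightarrow> real^'p \<Rightarrow> real) \<Rightarrow> bool" where
  "scalar_product_on E g \<longleftrightarrow>
     (\<forall>x\<in>E. \<forall>y\<in>E. g x y = g y x) \<and>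
     (\<forall>x\<in>E. \<forall>y\<in>E. \<forall>z\<in>E. g (x + y) z = g x z + g y z) \<and>
     (\<forall>x\<in>E. \<forall>z\<in>E. \<forall>c. g (c *\<^sub>R x) z = c * g x z) \<and>
     (\<forall>x\<in>E. x \<noteq> 0 \<longrightarrow> g x x > 0)"

definition similarity_on :: "(real^'p) set \<Rightarrow> (real^'p \<Rightarrow> real^'p \<Rightarrow> real) \<Rightarrow> real^'p^'p \<Rightarrow> bool" where
  "similarity_on E g A \<longleftrightarrow> (\<exists>r>0. \<forall>x\<in>E. \<forall>y\<in>E. g (A *v x) (A *v y) = r * g x y)"

definition isometry_on :: "(real^'p) set \<Rightarrow> (real^'p \<Rightarrow> real^'p \<Rightarrow> real) \<Rightarrow> real^'p^'p \<Rightarrow> bool" where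
  "isometry_on E g A \<longleftrightarrow> (\<forall>x\<in>E. \<forall>y\<in>E. g (A *v x) (A *v y) = g x y)"

definition acts_freely :: "'n::euclidean_space set \<Rightarrow> ((real^'p) \<times> 'n \<Rightarrow> (real^'p) \<times> 'n) set \<Rightarrow> bool" where
  "acts_freely C G \<longleftrightarrow> (\<forall>g\<in>G. \<forall>a. \<forall>x\<in>C. g (a, x) = (a, x) \<longrightarrow> g = idR C)"

definition acts_properly_discontinuously :: "'n::euclidean_space set \<Rightarrow> ((real^'p) \<times> 'n \<Rightarrow> (real^'p) \<times> 'n) set \<Rightarrow> bool" where
  "acts_properly_discontinuously C G \<longleftrightarrow>
     (\<forall>K. compact K \<and> K \<subseteq> UNIV \<times> C \<longrightarrow> finite {g\<in>G. g ` K \<inter> K \<noteq> {}})"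

definition acts_cocompactly :: "'n::euclidean_space set \<Rightarrow> ((real^'p) \<times> 'n \<Rightarrow> (real^'p) \<times> 'n) set \<Rightarrow> bool" where
  "acts_cocompactly C G \<longleftrightarrow> (\<exists>K. compact K \<and> K \<subseteq> UNIV \<times> C \<and> UNIV \<times> C = (\<Union>g\<in>G. g ` K))"

end

theory Submission
  imports Defs
begin

text \<open>Every \<open>\<omega> \<in> \<Omega>\<close> has lifts, because the translation part of a torus automorphism lifts along
  the covering \<open>\<real>\<^sup>p \<rightarrow> (S\<^sup>1)\<^sup>p\<close> over the simply connected \<open>C\<close>; two lifts of \<open>\<omega>\<close> have the same linear
  part and the same restriction to \<open>C\<close>, and, \<open>C\<close> being connected, their translation parts differ
  by a constant vector of \<open>\<int>\<^sup>p\<close>. So \<open>G\<close> is an extension of \<open>\<Omega>\<close> by the lattice of translations,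
  and the three properties reduce to those of \<open>\<Omega>\<close> on \<open>C\<close> and of \<open>\<int>\<^sup>p\<close> on \<open>\<real>\<^sup>p\<close>:
  a fixed point of \<open>g\<close> is a fixed point of \<open>\<omega>|\<^sub>C\<close>, excluded by (iv) unless \<open>\<omega> = id\<close>, and then \<open>g\<close>
  is a lattice translation; a compact set meets its translates under finitely many \<open>\<omega>\<close> and, in each
  fibre, under finitely many lattice translations; \<open>[0,1]\<^sup>p \<times> K\<close> is a fundamental compact set
  whenever \<open>K\<close> is one for \<open>\<Omega>\<close>.\<close>

section \<open>The lattice \<open>\<int>\<^sup>p\<close>\<close>

lemma Zvec_add: "a \<in> Zvec \<Longrightarrow> b \<in> Zvec \<Longrightarrow> a + b \<in> Zvec"
  by (simp add: Zvec_def)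

lemma Zvec_diff: "a \<in> Zvec \<Longrightarrow> b \<in> Zvec \<Longrightarrow> a - b \<in> Zvec"
  by (simp add: Zvec_def)

lemma matrix_vector_mult_Zvec:
  assumes "\<forall>i j. A $ i $ j \<in> \<int>" "v \<in> Zvec"
  shows "A *v v \<in> Zvec"
  using assms by (auto simp: Zvec_def matrix_vector_mult_def intro!: Ints_sum Ints_mult)

lemma GLZ_Ints: "A \<in> GLZ \<Longrightarrow> \<forall>i j. A $ i $ j \<in> \<int>"
  by (simp add: GLZ_def)

lemma mat_1_GLZ: "(mat 1 :: real^'p^'p) \<in> GLZ"
proof -
  have "matrix_inv (mat 1 :: real^'p^'p) ** mat 1 = mat 1"
    unfolding matrix_inv_def by (rule someI2[of _ "mat 1"]) (auto simp: matrix_mul_lid)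
  then have "matrix_inv (mat 1 :: real^'p^'p) = mat 1"
    by (simp add: matrix_mul_rid)
  moreover have "invertible (mat 1 :: real^'p^'p)"
    by (simp add: invertible_def)
  ultimately show ?thesis
    by (simp add: GLZ_def mat_def)
qed

lemma Zvec_norm_less_1:
  assumes "v \<in> Zvec" "norm v < 1"
  shows "v = 0"
proof -
  have "v $ i = 0" for i
    using component_le_norm_cart[of v i] assms Ints_nonzero_abs_less1 by (force simp: Zvec_def)
  then show ?thesis
    by (simp add: vec_eq_iff)
qed

lemma finite_Zvec_Int_bounded:
  assumes "bounded B"
  shows "finite (Zvec \<inter> B)"
proof -
  have "uniform_discrete (Zvec \<inter> B)"
    unfolding uniform_discrete_def
  proof (intro exI[of _ 1] conjI ballI impI)
    fix x y assume "x \<in> Zvec \<inter> B" "y \<in> Zvec \<inter> B" "dist x y < 1"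
    then show "x = y"
      using Zvec_norm_less_1[of "x - y"] Zvec_diff by (auto simp: dist_norm)
  qed simp
  moreover have "bounded (Zvec \<inter> B)"
    using assms by (rule bounded_subset) auto
  ultimately show ?thesis
    using uniform_discrete_finite_iff by blast
qed

text \<open>Test vectors \<open>axis j t\<close> with \<open>t\<close> small pick out a single entry of \<open>M\<close> as a
  number of modulus less than \<open>1\<close>.\<close>
lemma matrix_eq_0_if_Zvec_valued:
  fixes M :: "real^'p^'q"
  assumes "\<And>v. M *v v \<in> Zvec"
  shows "M = 0"
proof -
  have "M $ i $ j = 0" for i j
  proof -
    define m where "m = M $ i $ j"
    define t where "t = 1 / (2 * (\<bar>m\<bar> + 1))"
    have "t > 0"
      by (simp add: t_def add_pos_nonneg)
    have "(M *v axis j t) $ i = m * t"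
      by (simp add: matrix_vector_mult_def axis_def m_def if_distrib cong: if_cong)
    then have "m * t \<in> \<int>"
      using assms[of "axis j t"] by (metis Zvec_def mem_Collect_eq)
    moreover have "\<bar>m * t\<bar> < 1"
      by (simp add: t_def abs_mult field_simps)
    ultimately have "m * t = 0"
      using Ints_nonzero_abs_less1 by blast
    then show ?thesis
      using \<open>t > 0\<close> by (simp add: m_def)
  qed
  then show ?thesis
    by (simp add: vec_eq_iff)
qed

lemma abs_torus_rep_torus [simp]: "abs_torus (rep_torus t) = t"
  by (rule Quotient3_abs_rep[OF Quotient3_torus])

lemma abs_torus_eq_iff: "abs_torus a = abs_torus b \<longleftrightarrow> a - b \<in> Zvec"
  using Quotient3_rel[OF Quotient3_torus, of a b] Zvec_equivp
  by (metis (mono_tags, lifting) equivp_reflp)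

lemma rep_torus_abs_torus: "rep_torus (abs_torus a) - a \<in> Zvec"
  using abs_torus_eq_iff[of "rep_torus (abs_torus a)" a] by simp

section \<open>Smooth maps\<close>

lemma continuous_on_local_extension:
  fixes f :: "'a::metric_space \<Rightarrow> 'b::metric_space"
  assumes "\<And>x. x \<in> C \<Longrightarrow> \<exists>U G. open U \<and> x \<in> U \<and> continuous_on U G \<and> (\<forall>y\<in>C \<inter> U. f y = G y)"
  shows "continuous_on C f"
proof (rule continuous_on_eq_continuous_within[THEN iffD2], intro ballI)
  fix x assume x: "x \<in> C"
  obtain U G where U: "open U" "x \<in> U" "continuous_on U G" "\<forall>y\<in>C \<inter> U. f y = G y"
    using assms[OF x] by blast
  have "continuous (at x) G"
    using U continuous_on_eq_continuous_at by blast
  then have "continuous (at x within C \<inter> U) G"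
    using continuous_at_imp_continuous_within by blast
  then have c1: "continuous (at x within C \<inter> U) f"
    by (rule continuous_transform_within[of _ _ _ 1]) (use U x in auto)
  have "at x within C \<inter> U = at x within C"
    by (rule at_within_nhd[of x U]) (use U in auto)
  then show "continuous (at x within C) f"
    using c1 by simp
qed

lemma Cinf_on_imp_continuous_on: "Cinf_on U f \<Longrightarrow> continuous_on U f"
  unfolding Cinf_on_def by (metis Ck_on.simps(1))

lemma smooth_map_imp_continuous_on: "smooth_map C f \<Longrightarrow> continuous_on C f"
  unfolding smooth_map_def
  by (rule continuous_on_local_extension) (meson Cinf_on_imp_continuous_on)

lemma frechet_derivative_cong_open:
  assumes "open U" "x \<in> U" "\<And>y. y \<in> U \<Longrightarrow> f y = g y"
  shows "frechet_derivative f (at x) = frechet_derivative g (at x)"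
proof -
  have "(\<lambda>D. (f has_derivative D) (at x)) = (\<lambda>D. (g has_derivative D) (at x))"
  proof (rule ext, rule iffI)
    fix D assume "(f has_derivative D) (at x)"
    then show "(g has_derivative D) (at x)"
      by (rule has_derivative_transform_within_open[OF _ assms(1,2)]) (use assms(3) in auto)
  next
    fix D assume "(g has_derivative D) (at x)"
    then show "(f has_derivative D) (at x)"
      by (rule has_derivative_transform_within_open[OF _ assms(1,2)]) (use assms(3) in auto)
  qed
  then show ?thesis
    unfolding frechet_derivative_def by simp
qed

lemma differentiable_on_cong_open:
  assumes "open U" "\<And>y. y \<in> U \<Longrightarrow> f y = g y"
  shows "f differentiable_on U \<longleftrightarrow> g differentiable_on U"
proof -
  have "f differentiable (at x) \<longleftrightarrow> g differentiable (at x)" if "x \<in> U" for x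
    unfolding differentiable_def
    using has_derivative_transform_within_open[OF _ assms(1) that, of f _ UNIV g]
      has_derivative_transform_within_open[OF _ assms(1) that, of g _ UNIV f] assms(2) by metis
  then show ?thesis
    using assms(1) by (simp add: differentiable_on_eq_differentiable_at)
qed

lemma Ck_on_cong:
  assumes "open U" "\<And>y. y \<in> U \<Longrightarrow> f y = g y"
  shows "Ck_on k U f = Ck_on k U g"
  using assms(2)
proof (induction k arbitrary: f g)
  case 0
  then show ?case
    using continuous_on_cong by auto
next
  case (Suc k)
  have d: "f differentiable_on U \<longleftrightarrow> g differentiable_on U"
    using Suc.prems differentiable_on_cong_open[OF assms(1)] by metis
  have c: "continuous_on U f \<longleftrightarrow> continuous_on U g"
    using Suc.prems continuous_on_cong by auto
  have "Ck_on k U (\<lambda>x. frechet_derivative f (at x) v) = Ck_on k U (\<lambda>x. frechet_derivative g (at x) v)" for v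
    by (rule Suc.IH) (use frechet_derivative_cong_open[OF assms(1) _ Suc.prems] in auto)
  then show ?case
    using d c by simp
qed

lemma Ck_on_subset:
  assumes "open W" "W \<subseteq> U" "Ck_on k U f"
  shows "Ck_on k W f"
  using assms(3)
proof (induction k arbitrary: f)
  case 0
  then show ?case
    using continuous_on_subset assms(2) by auto
next
  case (Suc k)
  then show ?case
    using continuous_on_subset differentiable_on_subset assms(2) by auto
qed

lemma Ck_on_add_const:
  assumes "open U" "Ck_on k U f"
  shows "Ck_on k U (\<lambda>x. f x + c)"
  using assms(2)
proof (induction k arbitrary: f)
  case 0
  then show ?case by (auto intro!: continuous_intros)
next
  case (Suc k)
  have dif: "f differentiable_on U" and cf: "continuous_on U f"
    and h: "\<And>v. Ck_on k U (\<lambda>x. frechet_derivative f (at x) v)"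
    using Suc.prems by auto
  have eq: "frechet_derivative (\<lambda>x. f x + c) (at x) = frechet_derivative f (at x)" if "x \<in> U" for x
  proof -
    have "f differentiable (at x)"
      using dif that assms(1) by (simp add: differentiable_on_eq_differentiable_at)
    then have "((\<lambda>x. f x + c) has_derivative frechet_derivative f (at x)) (at x)"
      using frechet_derivative_works by (metis add_0_right has_derivative_add_const)
    then show ?thesis
      using frechet_derivative_at by metis
  qed
  have "Ck_on k U (\<lambda>x. frechet_derivative (\<lambda>x. f x + c) (at x) v)" for v
    using Ck_on_cong[OF assms(1), of "\<lambda>x. frechet_derivative (\<lambda>x. f x + c) (at x) v"
        "\<lambda>x. frechet_derivative f (at x) v" k] eq h by simp
  moreover have "(\<lambda>x. f x + c) differentiable_on U"
    using dif by (auto intro!: derivative_intros)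
  moreover have "continuous_on U (\<lambda>x. f x + c)"
    using cf by (auto intro!: continuous_intros)
  ultimately show ?case by simp
qed

lemma Cinf_on_subset: "open W \<Longrightarrow> W \<subseteq> U \<Longrightarrow> Cinf_on U f \<Longrightarrow> Cinf_on W f"
  unfolding Cinf_on_def using Ck_on_subset by blast

lemma Cinf_on_add_const: "open U \<Longrightarrow> Cinf_on U f \<Longrightarrow> Cinf_on U (\<lambda>x. f x + c)"
  unfolding Cinf_on_def using Ck_on_add_const by blast

lemma smooth_map_add_const:
  assumes "smooth_map C f"
  shows "smooth_map C (\<lambda>x. f x + c)"
  unfolding smooth_map_def
proof
  fix x assume "x \<in> C"
  then obtain U F where "open U" "x \<in> U" "Cinf_on U F" "\<forall>y\<in>C \<inter> U. f y = F y"
    using assms unfolding smooth_map_def by blast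
  then show "\<exists>U F. open U \<and> x \<in> U \<and> Cinf_on U F \<and> (\<forall>y\<in>C \<inter> U. f y + c = F y)"
    by (intro exI[of _ U] exI[of _ "\<lambda>y. F y + c"]) (auto intro: Cinf_on_add_const)
qed

text \<open>A chart straightens \<open>C \<inter> U\<close> onto the relatively open subset \<open>V \<inter> S\<close> of a linear
  subspace, which is locally path connected since it is an open subset of a convex set.\<close>
lemma smooth_submanifold_chart_locally_path_connected:
  fixes C :: "'n::euclidean_space set"
  assumes "smooth_submanifold C" "x \<in> C"
  obtains U where "open U" "x \<in> U" "locally path_connected (C \<inter> U)"
proof -
  obtain d where "\<forall>x\<in>C. \<exists>U V (\<phi>::'n \<Rightarrow> 'n) \<psi> S.
      open U \<and> open V \<and> x \<in> U \<and> \<phi> ` U = V \<and> \<psi> ` V = U \<and>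
      (\<forall>y\<in>U. \<psi> (\<phi> y) = y) \<and> (\<forall>z\<in>V. \<phi> (\<psi> z) = z) \<and>
      Cinf_on U \<phi> \<and> Cinf_on V \<psi> \<and>
      subspace S \<and> dim S = d \<and> \<phi> ` (C \<inter> U) = V \<inter> S"
    using assms(1)[unfolded smooth_submanifold_def] by (elim exE) assumption
  from this[rule_format, OF assms(2)] obtain U V and \<phi> \<psi> :: "'n \<Rightarrow> 'n" and S where ch:
      "open U" "open V" "x \<in> U" "\<forall>y\<in>U. \<psi> (\<phi> y) = y" "\<forall>z\<in>V. \<phi> (\<psi> z) = z"
      "Cinf_on U \<phi>" "Cinf_on V \<psi>" "subspace S" "\<phi> ` (C \<inter> U) = V \<inter> S"
    by (elim exE conjE) (rule that; assumption)
  have "\<psi> ` (V \<inter> S) = (\<lambda>y. \<psi> (\<phi> y)) ` (C \<inter> U)"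
    using ch(9) by (simp add: image_image flip: ch(9))
  also have "\<dots> = C \<inter> U"
    using ch(4) by (auto simp: image_iff)
  finally have hom: "homeomorphism (C \<inter> U) (V \<inter> S) \<phi> \<psi>"
    unfolding homeomorphism_def
    using ch(4,5,9) Cinf_on_imp_continuous_on[OF ch(6)] Cinf_on_imp_continuous_on[OF ch(7)]
    by (auto elim: continuous_on_subset)
  have "locally path_connected S"
    using convex_imp_locally_path_connected subspace_imp_convex ch(8) by blast
  then have "locally path_connected (V \<inter> S)"
    using locally_open_subset[of path_connected S "S \<inter> V"] openin_open_Int[OF ch(2), of S]
    by (simp add: Int_commute)
  then have "locally path_connected (C \<inter> U)"
    using homeomorphism_locally[OF hom, of path_connected path_connected]
      homeomorphic_path_connectedness homeomorphic_def by blast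
  then show thesis
    using that ch(1,3) by blast
qed

lemma smooth_submanifold_imp_locally_path_connected:
  fixes C :: "'n::euclidean_space set"
  assumes "smooth_submanifold C"
  shows "locally path_connected C"
  unfolding locally_def
proof (intro allI impI)
  fix w x assume wx: "openin (top_of_set C) w \<and> x \<in> w"
  then have "x \<in> C"
    using openin_imp_subset by blast
  then obtain U where U: "open U" "x \<in> U" and lpc: "locally path_connected (C \<inter> U)"
    using smooth_submanifold_chart_locally_path_connected[OF assms] by blast
  obtain Ow where Ow: "open Ow" "w = C \<inter> Ow"
    using wx by (auto simp: openin_open)
  have "openin (top_of_set (C \<inter> U)) (w \<inter> U)"
    using openin_open_Int[OF Ow(1), of "C \<inter> U"] Ow(2) by (simp add: Int_ac)
  moreover have "x \<in> w \<inter> U"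
    using wx U(2) by blast
  ultimately obtain u v where uv: "openin (top_of_set (C \<inter> U)) u" "path_connected v"
      "x \<in> u" "u \<subseteq> v" "v \<subseteq> w \<inter> U"
    using lpc[unfolded locally_def] by meson
  have "openin (top_of_set C) u"
    using uv(1) openin_trans openin_open_Int[OF U(1)] by (metis Int_commute)
  then show "\<exists>u v. openin (top_of_set C) u \<and> path_connected v \<and> x \<in> u \<and> u \<subseteq> v \<and> v \<subseteq> w"
    using uv by blast
qed

section \<open>Lifting maps into the torus\<close>

lemma exp_2pi_i_add_Ints:
  assumes "n \<in> \<int>"
  shows "exp (2 * of_real pi * \<i> * complex_of_real (a + n)) = exp (2 * of_real pi * \<i> * complex_of_real a)"
proof -
  obtain m where m: "n = of_int m"
    using assms Ints_cases by blast
  have "2 * of_real pi * \<i> * complex_of_real (a + n)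
      = 2 * of_real pi * \<i> * complex_of_real a + \<i> * (complex_of_int m * (complex_of_real pi * 2))"
    by (simp add: m algebra_simps)
  then show ?thesis
    using exp_plus_2pin by simp
qed

text \<open>Coordinatewise, \<open>exp (2\<pi>i \<cdot>)\<close> turns a torus-valued map into maps to the punctured
  plane, which lift through the covering \<open>exp\<close> because \<open>C\<close> is simply connected.\<close>
lemma torus_map_continuous_lift:
  fixes fb :: "'n::euclidean_space \<Rightarrow> 'p::finite torus"
  assumes sm: "smooth_map_T C fb" and sc: "simply_connected C" and lpc: "locally path_connected C"
  obtains f where "continuous_on C f" "\<forall>y\<in>C. f y - rep_torus (fb y) \<in> Zvec"
proof -
  define u where "u j y = exp (2 * of_real pi * \<i> * complex_of_real (rep_torus (fb y) $ j))" for j y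
  have ucont: "continuous_on C (u j)" for j
  proof (rule continuous_on_local_extension)
    fix x assume "x \<in> C"
    then obtain U and F :: "'n \<Rightarrow> real^'p"
      where UF: "open U" "x \<in> U" "Cinf_on U F" "\<forall>y\<in>C \<inter> U. fb y = abs_torus (F y)"
      using sm unfolding smooth_map_T_def by blast
    define G where "G y = exp (2 * of_real pi * \<i> * complex_of_real (F y $ j))" for y
    have "continuous_on U G"
      unfolding G_def using Cinf_on_imp_continuous_on[OF UF(3)]
      by (auto intro!: continuous_intros continuous_on_component)
    moreover have "u j y = G y" if y: "y \<in> C \<inter> U" for y
    proof -
      have "rep_torus (fb y) - F y \<in> Zvec"
        using UF(4) y rep_torus_abs_torus by metis
      then have "rep_torus (fb y) $ j - F y $ j \<in> \<int>"
        by (simp add: Zvec_def)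
      then have "u j y = exp (2 * of_real pi * \<i> * complex_of_real (F y $ j + (rep_torus (fb y) $ j - F y $ j)))"
        unfolding u_def by simp
      also have "\<dots> = G y"
        unfolding G_def by (rule exp_2pi_i_add_Ints) fact
      finally show ?thesis .
    qed
    ultimately show "\<exists>U G. open U \<and> x \<in> U \<and> continuous_on U G \<and> (\<forall>y\<in>C \<inter> U. u j y = G y)"
      using UF by blast
  qed
  have "\<exists>g. continuous_on C g \<and> (\<forall>y\<in>C. exp (g y) = u j y)" for j
  proof -
    have "u j \<in> C \<rightarrow> - {0}"
      by (auto simp: u_def)
    then show ?thesis
      using covering_space_lift[OF covering_space_exp_punctured_plane sc lpc ucont] by metis
  qed
  then obtain g where g: "\<And>j. continuous_on C (g j)" "\<And>j y. y \<in> C \<Longrightarrow> exp (g j y) = u j y"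
    by metis
  define f where "f y = (\<chi> j. Im (g j y) / (2 * pi))" for y
  have "continuous_on C f"
    unfolding f_def by (intro continuous_on_vec_lambda continuous_intros g(1)) simp
  moreover have "f y - rep_torus (fb y) \<in> Zvec" if y: "y \<in> C" for y
  proof -
    have "(f y - rep_torus (fb y)) $ j \<in> \<int>" for j
    proof -
      have "exp (g j y) = exp (2 * of_real pi * \<i> * complex_of_real (rep_torus (fb y) $ j))"
        using g(2)[OF y] by (simp add: u_def)
      then obtain n :: int where "g j y = 2 * of_real pi * \<i> * complex_of_real (rep_torus (fb y) $ j)
          + complex_of_real (real_of_int (2 * n) * pi) * \<i>"
        using exp_eq by blast
      then have "Im (g j y) / (2 * pi) = rep_torus (fb y) $ j + n"
        by (simp add: field_simps)
      then show ?thesis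
        by (simp add: f_def)
    qed
    then show ?thesis
      by (simp add: Zvec_def)
  qed
  ultimately show thesis
    using that by blast
qed

text \<open>Near each point \<open>f\<close> differs from a smooth local lift by a continuous lattice-valued map,
  that is, by a constant.\<close>
lemma smooth_map_if_lift_of_smooth_torus_map:
  fixes fb :: "'n::euclidean_space \<Rightarrow> 'p::finite torus"
  assumes sm: "smooth_map_T C fb" and fcont: "continuous_on C f"
    and fint: "\<forall>y\<in>C. f y - rep_torus (fb y) \<in> Zvec"
  shows "smooth_map C f"
  unfolding smooth_map_def
proof
  fix x assume x: "x \<in> C"
  then obtain U and F :: "'n \<Rightarrow> real^'p"
    where UF: "open U" "x \<in> U" "Cinf_on U F" "\<forall>y\<in>C \<inter> U. fb y = abs_torus (F y)"
    using sm unfolding smooth_map_T_def by blast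
  define D where "D y = f y - F y" for y
  have DZ: "D y \<in> Zvec" if "y \<in> C \<inter> U" for y
  proof -
    have "rep_torus (fb y) - F y \<in> Zvec"
      using UF(4) that rep_torus_abs_torus by metis
    then have "(f y - rep_torus (fb y)) + (rep_torus (fb y) - F y) \<in> Zvec"
      using that fint Zvec_add by blast
    then show ?thesis
      by (simp add: D_def)
  qed
  have "continuous (at x within C) f"
    using fcont x continuous_on_eq_continuous_within by blast
  then have "continuous (at x within C \<inter> U) f"
    by (rule continuous_within_subset) blast
  moreover have "continuous (at x within C \<inter> U) F"
    using Cinf_on_imp_continuous_on[OF UF(3)] UF(1,2)
    by (meson continuous_at_imp_continuous_within continuous_on_eq_continuous_at)
  ultimately have "continuous (at x within C \<inter> U) D"
    unfolding D_def by (intro continuous_intros)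
  then obtain \<delta> where \<delta>: "\<delta> > 0" "\<forall>y\<in>C \<inter> U. dist y x < \<delta> \<longrightarrow> dist (D y) (D x) < 1"
    unfolding continuous_within_eps_delta by (meson zero_less_one)
  have Deq: "D y = D x" if "y \<in> C \<inter> U" "dist y x < \<delta>" for y
  proof -
    have "D y - D x \<in> Zvec"
      using DZ that x UF(2) Zvec_diff by blast
    moreover have "norm (D y - D x) < 1"
      using \<delta> that by (simp add: dist_norm)
    ultimately show ?thesis
      using Zvec_norm_less_1 by fastforce
  qed
  let ?U = "U \<inter> ball x \<delta>"
  have "open ?U" "x \<in> ?U"
    using UF \<delta> by auto
  moreover have "Cinf_on ?U (\<lambda>y. F y + D x)"
    using Cinf_on_add_const[OF \<open>open ?U\<close> Cinf_on_subset[OF \<open>open ?U\<close> _ UF(3)]] by blast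
  moreover have "f y = F y + D x" if "y \<in> C \<inter> ?U" for y
    using Deq[of y] that by (simp add: D_def dist_commute) (metis diff_add_cancel add.commute)
  ultimately show "\<exists>U F. open U \<and> x \<in> U \<and> Cinf_on U F \<and> (\<forall>y\<in>C \<inter> U. f y = F y)"
    by blast
qed

lemma torus_map_smooth_lift:
  fixes fb :: "'n::euclidean_space \<Rightarrow> 'p::finite torus"
  assumes "smooth_map_T C fb" "simply_connected C" "locally path_connected C"
  obtains f where "smooth_map C f" "\<forall>y\<in>C. f y - rep_torus (fb y) \<in> Zvec"
  using torus_map_continuous_lift[OF assms] smooth_map_if_lift_of_smooth_torus_map[OF assms(1)]
  by metis

section \<open>Lifts of torus bundle automorphisms\<close>

lemma aut_R_apply: "x \<in> C \<Longrightarrow> aut_R C A f \<phi> (a, x) = (A *v a + f x, \<phi> x)"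
  by (simp add: aut_R_def)

lemma aut_R_cong:
  "(\<And>x. x \<in> C \<Longrightarrow> f x = f' x \<and> \<phi> x = \<phi>' x) \<Longrightarrow> aut_R C A f \<phi> = aut_R C A f' \<phi>'"
  by (auto simp: aut_R_def fun_eq_iff)

lemma aut_R_identity: "aut_R C (mat 1) (\<lambda>_. 0) (\<lambda>x. x) = idR C"
  by (auto simp: fun_eq_iff aut_R_def idR_def)

lemma aut_R_mem_UNIV_Times:
  assumes "diffeo C \<phi>" "x \<in> C"
  shows "aut_R C A f \<phi> (a, x) \<in> UNIV \<times> C"
  using assms bij_betwE by (fastforce simp: aut_R_apply diffeo_def)

lemma redP_aut_R_apply:
  "x \<in> C \<Longrightarrow> redP C (aut_R C A f \<phi>) (ab, x) = (abs_torus (A *v rep_torus ab + f x), \<phi> x)"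
  by (simp add: redP_def aut_R_def)

lemma restrC_redP_aut_R: "x \<in> C \<Longrightarrow> restrC (redP C (aut_R C A f \<phi>)) x = \<phi> x"
  by (simp add: restrC_def redP_aut_R_apply)

lemma redP_aut_R_identity: "redP C (aut_R C (mat 1) (\<lambda>_. 0) (\<lambda>x. x)) = idT C"
  by (auto simp: fun_eq_iff redP_def aut_R_def idT_def)

lemma redP_aut_R_eq_aut_T:
  assumes "\<forall>y\<in>C. f y - rep_torus (fb y) \<in> Zvec"
  shows "redP C (aut_R C A f \<phi>) = aut_T C A fb \<phi>"
proof (rule ext, clarify)
  fix ab x
  show "redP C (aut_R C A f \<phi>) (ab, x) = aut_T C A fb \<phi> (ab, x)"
  proof (cases "x \<in> C")
    case True
    then have "(A *v rep_torus ab + f x) - (A *v rep_torus ab + rep_torus (fb x)) \<in> Zvec"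
      using assms by simp
    then show ?thesis
      using True by (simp add: redP_aut_R_apply aut_T_def abs_torus_eq_iff)
  next
    case False
    then show ?thesis
      by (simp add: redP_def aut_T_def)
  qed
qed

lemma AutZ_E_elim:
  assumes "g \<in> AutZ_E C E1 E2"
  obtains A f \<phi> where "g = aut_R C A f \<phi>" "A \<in> GLZ" "smooth_map C f" "diffeo C \<phi>"
  using assms by (auto simp: AutZ_E_def)

lemma AutZ_E_mem_UNIV_Times:
  assumes "g \<in> AutZ_E C E1 E2" "x \<in> C"
  shows "g (a, x) \<in> UNIV \<times> C"
  using assms by (auto elim!: AutZ_E_elim intro: aut_R_mem_UNIV_Times)

lemma Zvec_valued_continuous_constant:
  fixes D :: "'a::topological_space \<Rightarrow> real^'p"
  assumes "connected C" "continuous_on C D" "\<forall>x\<in>C. D x \<in> Zvec" "x0 \<in> C"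
  shows "\<forall>x\<in>C. D x = D x0"
proof -
  have "(\<lambda>x. D x $ i) constant_on C" for i
  proof (rule continuous_discrete_range_constant[OF assms(1)])
    show "continuous_on C (\<lambda>x. D x $ i)"
      using assms(2) by (intro continuous_on_component)
    fix x assume x: "x \<in> C"
    show "\<exists>e>0. \<forall>y. y \<in> C \<and> D y $ i \<noteq> D x $ i \<longrightarrow> e \<le> norm (D y $ i - D x $ i)"
    proof (intro exI[of _ 1] conjI allI impI)
      fix y assume y: "y \<in> C \<and> D y $ i \<noteq> D x $ i"
      have "D y $ i - D x $ i \<in> \<int>"
        using assms(3) x y by (simp add: Zvec_def)
      then show "1 \<le> norm (D y $ i - D x $ i)"
        using Ints_nonzero_abs_less1 y by force
    qed simp
  qed
  then show ?thesis
    using assms(4) by (simp add: constant_on_def vec_eq_iff) metis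
qed

lemma redP_aut_R_eq_imp:
  fixes C :: "'n::euclidean_space set" and f f' :: "'n \<Rightarrow> real^'p::finite"
  assumes A: "A \<in> GLZ" "A' \<in> GLZ" and cf: "continuous_on C f" "continuous_on C f'"
    and conn: "connected C" and x0: "x0 \<in> C"
    and eq: "redP C (aut_R C A f \<phi>) = redP C (aut_R C A' f' \<phi>')"
  shows "A = A' \<and> (\<forall>x\<in>C. \<phi>' x = \<phi> x) \<and> (\<exists>k\<in>Zvec. \<forall>x\<in>C. f' x = f x + k)"
proof -
  have ev: "(A *v rep_torus ab + f x) - (A' *v rep_torus ab + f' x) \<in> Zvec \<and> \<phi> x = \<phi>' x"
    if "x \<in> C" for x ab
    using fun_cong[OF eq, of "(ab, x)"] that by (simp add: redP_aut_R_apply abs_torus_eq_iff)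
  have iA: "\<forall>i j. A $ i $ j \<in> \<int>" "\<forall>i j. A' $ i $ j \<in> \<int>"
    using A GLZ_Ints by auto
  have fd: "f' x - f x \<in> Zvec" if x: "x \<in> C" for x
  proof -
    define z0 :: "real^'p" where "z0 = rep_torus (abs_torus 0)"
    have z0: "z0 \<in> Zvec"
      using rep_torus_abs_torus[of "0::real^'p"] by (simp add: z0_def)
    have "f' x - f x = A *v z0 - A' *v z0 - ((A *v z0 + f x) - (A' *v z0 + f' x))"
      by (simp add: algebra_simps)
    then show ?thesis
      using ev[OF x, of "abs_torus 0"] matrix_vector_mult_Zvec[OF _ z0] iA Zvec_diff
      by (metis z0_def)
  qed
  have "(A - A') *v v \<in> Zvec" for v
  proof -
    define r where "r = rep_torus (abs_torus v)"
    have "(A - A') *v r = ((A *v r + f x0) - (A' *v r + f' x0)) + (f' x0 - f x0)"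
      by (simp add: matrix_vector_mult_diff_rdistrib algebra_simps)
    moreover have "((A *v r + f x0) - (A' *v r + f' x0)) + (f' x0 - f x0) \<in> Zvec"
      using ev[OF x0, of "abs_torus v"] fd[OF x0] Zvec_add unfolding r_def by blast
    ultimately have "(A - A') *v r \<in> Zvec"
      by metis
    moreover have "(A - A') *v v = (A - A') *v r - (A - A') *v (r - v)"
      by (simp add: matrix_vector_mult_diff_distrib)
    moreover have "(A - A') *v (r - v) \<in> Zvec"
      using iA rep_torus_abs_torus[of v] by (intro matrix_vector_mult_Zvec) (auto simp: r_def)
    ultimately show ?thesis
      using Zvec_diff by metis
  qed
  then have "A = A'"
    using matrix_eq_0_if_Zvec_valued by force
  have "\<forall>x\<in>C. f' x - f x = f' x0 - f x0"
    using fd cf conn x0 by (intro Zvec_valued_continuous_constant) (auto intro: continuous_intros)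
  then have "\<forall>x\<in>C. f' x = f x + (f' x0 - f x0)"
    by (metis add_diff_cancel_left' diff_add_cancel add.commute)
  with \<open>A = A'\<close> show ?thesis
    using ev fd[OF x0] by auto
qed

section \<open>The action of the group of lifts\<close>

lemma lifts_act_freely:
  assumes conn: "connected C"
    and fix_free: "\<forall>\<omega>\<in>\<Omega>. \<forall>x\<in>C. \<omega> \<noteq> idT C \<and> restrC \<omega> x = x \<longrightarrow>
                 (\<forall>g\<in>AutZ_E C E1 E2. redP C g = \<omega> \<longrightarrow> (\<forall>a. g (a, x) \<noteq> (a, x)))"
  shows "acts_freely C {g \<in> AutZ_E C E1 E2. redP C g \<in> \<Omega>}"
  unfolding acts_freely_def
proof (intro ballI allI impI)
  fix g a x assume g: "g \<in> {g \<in> AutZ_E C E1 E2. redP C g \<in> \<Omega>}" and x: "x \<in> C"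
    and fixed: "g (a, x) = (a, x)"
  obtain A f \<phi> where gA: "g = aut_R C A f \<phi>" "A \<in> GLZ" "smooth_map C f" "diffeo C \<phi>"
    using g by (auto elim: AutZ_E_elim)
  have fixed': "A *v a + f x = a" "\<phi> x = x"
    using fixed x by (simp_all add: gA aut_R_apply)
  show "g = idR C"
  proof (cases "redP C g = idT C")
    case False
    have "restrC (redP C g) x = x"
      using x fixed' by (simp add: gA restrC_redP_aut_R)
    then show ?thesis
      using fix_free g x False fixed by blast
  next
    case True
    then have "redP C (aut_R C (mat 1) (\<lambda>_. 0) (\<lambda>x. x)) = redP C (aut_R C A f \<phi>)"
      by (simp add: gA redP_aut_R_identity)
    from redP_aut_R_eq_imp[OF mat_1_GLZ gA(2) continuous_on_const
        smooth_map_imp_continuous_on[OF gA(3)] conn x this]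
    obtain k where k: "A = mat 1" "\<forall>y\<in>C. \<phi> y = y" "\<forall>y\<in>C. f y = k"
      by auto
    then have "k = 0"
      using fixed'(1) x by simp
    then have "g = aut_R C (mat 1) (\<lambda>_. 0) (\<lambda>x. x)"
      unfolding gA k(1) using k by (intro aut_R_cong) auto
    then show ?thesis
      by (simp add: aut_R_identity)
  qed
qed

text \<open>All lifts of \<open>\<omega>\<close> are \<open>g\<^sub>0 + k\<close> for one lift \<open>g\<^sub>0\<close> and \<open>k \<in> \<int>\<^sup>p\<close>; if \<open>g\<^sub>0 + k\<close> moves a point
  of \<open>K\<close> into \<open>K\<close>, then \<open>k\<close> lies in the compact set of differences \<open>fst ` K - fst ` g\<^sub>0 ` K\<close>.\<close>
lemma finite_lifts_meeting_compact:
  fixes K :: "((real^'p::finite) \<times> 'n::euclidean_space) set"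
  assumes conn: "connected C" and K: "compact K" "K \<subseteq> UNIV \<times> C"
  shows "finite {g \<in> AutZ_E C E1 E2. redP C g = \<omega> \<and> g ` K \<inter> K \<noteq> {}}" (is "finite ?S")
proof (cases "?S = {}")
  case False
  then obtain g0 where "g0 \<in> AutZ_E C E1 E2" "redP C g0 = \<omega>"
    by blast
  then obtain A0 f0 \<phi>0 where g0: "redP C (aut_R C A0 f0 \<phi>0) = \<omega>" "A0 \<in> GLZ" "smooth_map C f0"
    by (auto elim!: AutZ_E_elim)
  define h where "h z = A0 *v fst z + f0 (snd z)" for z :: "(real^'p) \<times> 'n"
  have "continuous_on UNIV ((*v) A0)"
    by (rule linear_continuous_on[OF matrix_vector_mul_bounded_linear])
  then have "continuous_on (UNIV \<times> C) (\<lambda>z. A0 *v fst z)"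
    by (rule continuous_on_compose2) (auto intro: continuous_intros)
  moreover have "continuous_on (UNIV \<times> C) (\<lambda>z. f0 (snd z))"
    using smooth_map_imp_continuous_on[OF g0(3)]
    by (rule continuous_on_compose2) (auto intro: continuous_intros)
  ultimately have "continuous_on (UNIV \<times> C) h"
    unfolding h_def by (rule continuous_on_add)
  then have "compact (h ` K)"
    using K by (auto intro: compact_continuous_image continuous_on_subset)
  moreover have "compact (fst ` K)"
    using K(1) by (intro compact_continuous_image continuous_intros)
  ultimately have "compact {b - c |b c. b \<in> fst ` K \<and> c \<in> h ` K}"
    by (rule compact_differences[rotated])
  then have fin: "finite (Zvec \<inter> {b - c |b c. b \<in> fst ` K \<and> c \<in> h ` K})"
    using finite_Zvec_Int_bounded compact_imp_bounded by blast
  have "?S \<subseteq> (\<lambda>k. aut_R C A0 (\<lambda>x. f0 x + k) \<phi>0) ` (Zvec \<inter> {b - c |b c. b \<in> fst ` K \<and> c \<in> h ` K})"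
  proof
    fix g assume g: "g \<in> ?S"
    then obtain A f \<phi> where gA: "g = aut_R C A f \<phi>" "A \<in> GLZ" "smooth_map C f"
      by (auto elim!: AutZ_E_elim)
    obtain a x where ax: "(a, x) \<in> K" "g (a, x) \<in> K"
      using g by auto
    have x: "x \<in> C"
      using ax K by auto
    have "redP C (aut_R C A0 f0 \<phi>0) = redP C (aut_R C A f \<phi>)"
      using g g0(1) gA(1) by simp
    from redP_aut_R_eq_imp[OF g0(2) gA(2) smooth_map_imp_continuous_on[OF g0(3)]
        smooth_map_imp_continuous_on[OF gA(3)] conn x this]
    obtain k where k: "A = A0" "\<forall>y\<in>C. \<phi> y = \<phi>0 y" "k \<in> Zvec" "\<forall>y\<in>C. f y = f0 y + k"
      by auto
    have g_eq: "g = aut_R C A0 (\<lambda>x. f0 x + k) \<phi>0"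
      unfolding gA k(1) using k by (intro aut_R_cong) auto
    have "g (a, x) = (A0 *v a + f0 x + k, \<phi>0 x)"
      using x by (simp add: g_eq aut_R_apply)
    then have "A0 *v a + f0 x + k \<in> fst ` K"
      using ax(2) by (metis fst_conv image_eqI)
    moreover have "A0 *v a + f0 x \<in> h ` K"
      using ax(1) unfolding h_def by force
    ultimately have "k \<in> {b - c |b c. b \<in> fst ` K \<and> c \<in> h ` K}"
      by (metis (mono_tags, lifting) add_diff_cancel_left' mem_Collect_eq)
    then show "g \<in> (\<lambda>k. aut_R C A0 (\<lambda>x. f0 x + k) \<phi>0) ` (Zvec \<inter> {b - c |b c. b \<in> fst ` K \<and> c \<in> h ` K})"
      using k(3) g_eq by blast
  qed
  then show ?thesis
    using fin finite_subset by blast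
next
  case True
  then show ?thesis
    by (simp only: finite.emptyI)
qed

lemma lifts_act_properly_discontinuously:
  fixes C :: "'n::euclidean_space set" and \<Omega> :: "('p::finite torus \<times> 'n \<Rightarrow> 'p torus \<times> 'n) set"
  assumes conn: "connected C" and proper: "proper_on_C C \<Omega>"
  shows "acts_properly_discontinuously C {g \<in> AutZ_E C E1 E2. redP C g \<in> \<Omega>}"
  unfolding acts_properly_discontinuously_def
proof (intro allI impI)
  fix K :: "((real^'p) \<times> 'n) set" assume K: "compact K \<and> K \<subseteq> UNIV \<times> C"
  have KC: "compact (snd ` K)" "snd ` K \<subseteq> C"
    using K by (auto intro!: compact_continuous_image continuous_intros)
  define F where "F = {\<omega>\<in>\<Omega>. restrC \<omega> ` snd ` K \<inter> snd ` K \<noteq> {}}"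
  have "finite F"
    using proper KC unfolding proper_on_C_def F_def by blast
  moreover have "{g \<in> {g \<in> AutZ_E C E1 E2. redP C g \<in> \<Omega>}. g ` K \<inter> K \<noteq> {}}
      \<subseteq> (\<Union>\<omega>\<in>F. {g \<in> AutZ_E C E1 E2. redP C g = \<omega> \<and> g ` K \<inter> K \<noteq> {}})"
  proof
    fix g assume "g \<in> {g \<in> {g \<in> AutZ_E C E1 E2. redP C g \<in> \<Omega>}. g ` K \<inter> K \<noteq> {}}"
    then obtain a x where g: "g \<in> AutZ_E C E1 E2" "redP C g \<in> \<Omega>" and ax: "(a, x) \<in> K" "g (a, x) \<in> K"
      by auto
    obtain A f \<phi> where gA: "g = aut_R C A f \<phi>"
      using g(1) by (auto elim: AutZ_E_elim)
    have x: "x \<in> C"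
      using ax K by auto
    have "g (a, x) = (A *v a + f x, \<phi> x)" "restrC (redP C g) x = \<phi> x"
      using x by (simp_all add: gA aut_R_apply restrC_redP_aut_R)
    then have "restrC (redP C g) x \<in> snd ` K"
      using ax(2) by (metis snd_conv image_eqI)
    moreover have "x \<in> snd ` K"
      using ax(1) by force
    ultimately have "redP C g \<in> F"
      using g(2) unfolding F_def by blast
    then show "g \<in> (\<Union>\<omega>\<in>F. {g \<in> AutZ_E C E1 E2. redP C g = \<omega> \<and> g ` K \<inter> K \<noteq> {}})"
      using g ax by blast
  qed
  moreover have "finite {g \<in> AutZ_E C E1 E2. redP C g = \<omega> \<and> g ` K \<inter> K \<noteq> {}}" for \<omega>
    using finite_lifts_meeting_compact[OF conn] K by blast
  ultimately show "finite {g \<in> {g \<in> AutZ_E C E1 E2. redP C g \<in> \<Omega>}. g ` K \<inter> K \<noteq> {}}"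
    by (meson finite_UN_I finite_subset)
qed

text \<open>Lift \<open>\<omega>\<close> through the torus lifting, then correct the translation part by \<open>A k\<close>, where \<open>k\<close> is
  the integer part of \<open>A\<^sup>-\<^sup>1 (a - f x)\<close>, so that the preimage of \<open>(a, \<omega>|\<^sub>C x)\<close> over \<open>x\<close> lands in the unit cube.\<close>
lemma AutT_E_lift_from_unit_cube:
  fixes C :: "'n::euclidean_space set" and \<omega> :: "'p::finite torus \<times> 'n \<Rightarrow> 'p torus \<times> 'n"
  assumes \<omega>: "\<omega> \<in> AutT_E C E1 E2" and sc: "simply_connected C" and lpc: "locally path_connected C"
    and x: "x \<in> C"
  obtains g b where "g \<in> AutZ_E C E1 E2" "redP C g = \<omega>" "b \<in> cbox 0 (vec 1)" "g (b, x) = (a, restrC \<omega> x)"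
proof -
  obtain A fb \<phi> where \<omega>A: "\<omega> = aut_T C A fb \<phi>" "A \<in> GLZ" "smooth_map_T C fb" "diffeo C \<phi>"
    using \<omega> unfolding AutT_E_def AutT_def by blast
  obtain f where f: "smooth_map C f" "\<forall>y\<in>C. f y - rep_torus (fb y) \<in> Zvec"
    using torus_map_smooth_lift[OF \<omega>A(3) sc lpc] by blast
  have invA: "invertible A"
    using \<omega>A(2) by (simp add: GLZ_def)
  then obtain A' where A': "A ** A' = mat 1"
    unfolding invertible_def by blast
  define b' where "b' = A' *v (a - f x)"
  define k :: "real^'p" where "k = (\<chi> i. of_int \<lfloor>b' $ i\<rfloor>)"
  define g where "g = aut_R C A (\<lambda>y. f y + A *v k) \<phi>"
  have "k \<in> Zvec"
    by (simp add: k_def Zvec_def)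
  then have "\<forall>y\<in>C. (f y + A *v k) - rep_torus (fb y) \<in> Zvec"
    using f(2) Zvec_add matrix_vector_mult_Zvec[OF GLZ_Ints[OF \<omega>A(2)]]
    by (metis add.commute add_diff_eq)
  then have red: "redP C g = \<omega>"
    unfolding g_def \<omega>A(1) by (rule redP_aut_R_eq_aut_T)
  have "g \<in> AutR C"
    unfolding g_def AutR_def using invA smooth_map_add_const[OF f(1)] \<omega>A(4) by blast
  then have "g \<in> AutZ_E C E1 E2"
    using \<omega> red unfolding AutT_E_def by blast
  moreover have "(b' - k) $ i = frac (b' $ i)" for i
    by (simp add: k_def frac_def)
  then have "b' - k \<in> cbox 0 (vec 1)"
    unfolding mem_box_cart by (simp add: frac_ge_0 less_imp_le[OF frac_lt_1])
  moreover have "g (b' - k, x) = (a, restrC \<omega> x)"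
  proof -
    have "A *v (b' - k) + (f x + A *v k) = A *v b' + f x"
      by (simp add: matrix_vector_right_distrib algebra_simps)
    also have "\<dots> = a"
      by (simp add: b'_def matrix_vector_mul_assoc A')
    finally show ?thesis
      using x red by (simp add: g_def aut_R_apply restrC_redP_aut_R flip: red)
  qed
  ultimately show thesis
    using that red by blast
qed

lemma lifts_act_cocompactly:
  fixes C :: "'n::euclidean_space set" and \<Omega> :: "('p::finite torus \<times> 'n \<Rightarrow> 'p torus \<times> 'n) set"
  assumes sc: "simply_connected C" and lpc: "locally path_connected C"
    and \<Omega>: "\<Omega> \<subseteq> AutT_E C E1 E2" and cocompact: "cocompact_on_C C \<Omega>"
  shows "acts_cocompactly C {g \<in> AutZ_E C E1 E2. redP C g \<in> \<Omega>}"
proof -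
  obtain KC where KC: "compact KC" "KC \<subseteq> C" "C = (\<Union>\<omega>\<in>\<Omega>. restrC \<omega> ` KC)"
    using cocompact unfolding cocompact_on_C_def by blast
  define K where "K = cbox (0::real^'p) (vec 1) \<times> KC"
  have "g z \<in> UNIV \<times> C" if "g \<in> AutZ_E C E1 E2" and "z \<in> K" for g z
    using that KC(2) unfolding K_def by (auto intro: AutZ_E_mem_UNIV_Times)
  then have "(\<Union>g\<in>{g \<in> AutZ_E C E1 E2. redP C g \<in> \<Omega>}. g ` K) \<subseteq> UNIV \<times> C"
    by blast
  moreover have "UNIV \<times> C \<subseteq> (\<Union>g\<in>{g \<in> AutZ_E C E1 E2. redP C g \<in> \<Omega>}. g ` K)"
  proof clarify
    fix a y assume "y \<in> C"
    then obtain \<omega> x where \<omega>: "\<omega> \<in> \<Omega>" "x \<in> KC" "y = restrC \<omega> x"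
      using KC(3) by blast
    have "\<omega> \<in> AutT_E C E1 E2" "x \<in> C"
      using \<omega> \<Omega> KC(2) by auto
    then obtain g b where g: "g \<in> AutZ_E C E1 E2" "redP C g = \<omega>" and b: "b \<in> cbox 0 (vec 1)"
      and gbx: "g (b, x) = (a, restrC \<omega> x)"
      by (rule AutT_E_lift_from_unit_cube[OF _ sc lpc])
    have "(a, y) \<in> g ` K"
      using gbx \<omega> b unfolding K_def by (metis image_eqI mem_Sigma_iff)
    then show "(a, y) \<in> (\<Union>g\<in>{g \<in> AutZ_E C E1 E2. redP C g \<in> \<Omega>}. g ` K)"
      using g \<omega>(1) by blast
  qed
  moreover have "compact K"
    unfolding K_def using KC(1) by (intro compact_Times compact_cbox)
  moreover have "K \<subseteq> UNIV \<times> C"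
    unfolding K_def using KC(2) by blast
  ultimately show ?thesis
    unfolding acts_cocompactly_def by blast
qed

theorem mainTheorem10:
  fixes C :: "'n::euclidean_space set"
    and E1 E2 :: "(real^'p::finite) set"
    and q :: nat
    and \<Omega> :: "('p torus \<times> 'n \<Rightarrow> 'p torus \<times> 'n) set"
  assumes manifold: "smooth_submanifold C"
    and simply_conn: "simply_connected C"
    and p_ge_2: "CARD('p) \<ge> 2"
    and q_ge_1: "q \<ge> 1"
    and E_decomp: "subspace E1" "subspace E2" "dim E1 = q" "E1 \<inter> E2 = {0}" "E1 + E2 = UNIV"
    and subgroup: "is_subgroup_T C \<Omega> (AutT_E C E1 E2)"
    and discrete: "discrete_T C \<Omega>"
    and H_i: "proper_on_C C \<Omega>" "cocompact_on_C C \<Omega>"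
    and H_ii: "\<forall>\<omega>\<in>\<Omega>. (\<lambda>v. linpartT C \<omega> *v v) ` E1 \<subseteq> E1 \<and> (\<lambda>v. linpartT C \<omega> *v v) ` E2 \<subseteq> E2"
    and H_iii: "\<exists>g. scalar_product_on E1 g \<and> (\<forall>\<omega>\<in>\<Omega>. similarity_on E1 g (linpartT C \<omega>)) \<and>
                    (\<exists>\<omega>\<in>\<Omega>. \<not> isometry_on E1 g (linpartT C \<omega>))"
    and H_iv: "\<forall>\<omega>\<in>\<Omega>. \<forall>x\<in>C. \<omega> \<noteq> idT C \<and> restrC \<omega> x = x \<longrightarrow>
                 (\<forall>g\<in>AutZ_E C E1 E2. redP C g = \<omega> \<longrightarrow> (\<forall>a. g (a, x) \<noteq> (a, x)))"
  shows "acts_freely C {g \<in> AutZ_E C E1 E2. redP C g \<in> \<Omega>} \<and>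
         acts_properly_discontinuously C {g \<in> AutZ_E C E1 E2. redP C g \<in> \<Omega>} \<and>
         acts_cocompactly C {g \<in> AutZ_E C E1 E2. redP C g \<in> \<Omega>}"
proof -
  have conn: "connected C"
    using simply_conn by (rule simply_connected_imp_connected)
  have lpc: "locally path_connected C"
    using manifold by (rule smooth_submanifold_imp_locally_path_connected)
  have "\<Omega> \<subseteq> AutT_E C E1 E2"
    using subgroup by (simp add: is_subgroup_T_def)
  then show ?thesis
    using lifts_act_freely[OF conn H_iv] lifts_act_properly_discontinuously[OF conn H_i(1)]
      lifts_act_cocompactly[OF simply_conn lpc _ H_i(2)]
    by blast
qed

end
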